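(* Let $D=[0,1]^2\setminus\{(0,0),(1,1)\}$. A function $J\colon D\to[0,1]$ is an involutive Jamesian function if and only if it satisfies the following three conditions: (i) $J(a,J(a,b))=b$ for all $0<a<1$ and $0\le b\le 1$; (ii) $J(b,a)=1-J(a,b)$ for all $(a,b)\in D$; (iii) $J(a,b)$ is a non-decreasing function of $a$ for each $0\le b\le 1$ and a strictly increasing function of $a$ for each $0<b<1$.
   Context: Let $D=[0,1]^2\setminus\{(0,0),(1,1)\}$. A function $J\colon D\to\mathbb{R}$ is called Jamesian if it satisfies, for all $(a,b)\in D$: (a) $J(a,\tfrac12)=a$; (b) $J(a,0)=1$ for $0<a\le 1$; (c) $J(b,a)=1-J(a,b)$; (d) $J(1-b,1-a)=J(a,b)$; (e) $J(a,b)$ is a non-decreasing function of $a$ for each $0\le b\le 1$ and a strictly increasing function of $a$ for each $0<b<1$. A Jamesian function is called involutive if in addition $J(a,J(a,b))=b$ whenever $0<a<1$ and $0\le b\le 1$. *)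

theory Defs
  imports Complex_Main
begin

definition JD :: "(real \<times> real) set" where
  "JD = ({0..1} \<times> {0..1}) - {(0,0), (1,1)}"

definition mono_cond :: "(real \<Rightarrow> real \<Rightarrow> real) \<Rightarrow> bool" where
  "mono_cond J \<longleftrightarrow>
     (\<forall>b \<in> {0..1}. \<forall>a a'. (a,b) \<in> JD \<and> (a',b) \<in> JD \<and> a \<le> a' \<longrightarrow> J a b \<le> J a' b) \<and>
     (\<forall>b \<in> {0<..<1}. \<forall>a a'. (a,b) \<in> JD \<and> (a',b) \<in> JD \<and> a < a' \<longrightarrow> J a b < J a' b)"

definition jamesian :: "(real \<Rightarrow> real \<Rightarrow> real) \<Rightarrow> bool" where
  "jamesian J \<longleftrightarrow>
     (\<forall>a \<in> {0..1}. J a (1/2) = a) \<and>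
     (\<forall>a \<in> {0<..1}. J a 0 = 1) \<and>
     (\<forall>(a,b) \<in> JD. J b a = 1 - J a b) \<and>
     (\<forall>(a,b) \<in> JD. J (1 - b) (1 - a) = J a b) \<and>
     mono_cond J"

definition involutive_jamesian :: "(real \<Rightarrow> real \<Rightarrow> real) \<Rightarrow> bool" where
  "involutive_jamesian J \<longleftrightarrow>
     jamesian J \<and> (\<forall>a \<in> {0<..<1}. \<forall>b \<in> {0..1}. J a (J a b) = b)"

end

theory Submission
  imports Defs
begin

text \<open>Only the two normalisations J(a,1/2) = a, J(a,0) = 1 and the reflection law
  J(1-b,1-a) = J(a,b) have to be derived. Complementarity J(b,a) = 1 - J(a,b) turns
  strict monotonicity in the first argument into strict antitonicity in the second, and
  with involutivity this pins down the boundary values: d = J(a,0) satisfies J(a,d) = 0,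
  which forces d = 1. For c = J(a,1/2) involutivity and complementarity give
  J(c,a) = 1/2 = J(a,a), so strict monotonicity forces c = a. The reflection law follows
  from alternating the involution and complementarity three times each:
  c = J(a,b) gives J(a,c) = b, J(c,a) = 1-b, J(c,1-b) = a, J(1-b,c) = 1-a and finally
  J(1-b,1-a) = c.\<close>

lemma mem_JD_iff:
  "(a, b) \<in> JD \<longleftrightarrow>
     0 \<le> a \<and> a \<le> 1 \<and> 0 \<le> b \<and> b \<le> 1 \<and> \<not> (a = 0 \<and> b = 0) \<and> \<not> (a = 1 \<and> b = 1)"
  by (auto simp: JD_def)

locale involutive_complementary =
  fixes J :: "real \<Rightarrow> real \<Rightarrow> real"
  assumes range: "(a, b) \<in> JD \<Longrightarrow> 0 \<le> J a b \<and> J a b \<le> 1"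
    and involution: "0 < a \<Longrightarrow> a < 1 \<Longrightarrow> 0 \<le> b \<Longrightarrow> b \<le> 1 \<Longrightarrow> J a (J a b) = b"
    and complement: "(a, b) \<in> JD \<Longrightarrow> J b a = 1 - J a b"
    and mono: "mono_cond J"
begin

lemma mono_first:
  "(a, b) \<in> JD \<Longrightarrow> (a', b) \<in> JD \<Longrightarrow> a \<le> a' \<Longrightarrow> J a b \<le> J a' b"
  using mono unfolding mono_cond_def by (auto simp: mem_JD_iff)

lemma strict_mono_first:
  "0 < b \<Longrightarrow> b < 1 \<Longrightarrow> 0 \<le> a \<Longrightarrow> a < a' \<Longrightarrow> a' \<le> 1 \<Longrightarrow> J a b < J a' b"
  using mono unfolding mono_cond_def by (auto simp: mem_JD_iff)

lemma strict_antimono_second: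
  assumes "0 < a" "a < 1" "0 \<le> b" "b < b'" "b' \<le> 1"
  shows "J a b' < J a b"
proof -
  have "J b a < J b' a"
    using strict_mono_first assms by auto
  moreover have "J a b = 1 - J b a" "J a b' = 1 - J b' a"
    using complement[of b a] complement[of b' a] assms by (simp_all add: mem_JD_iff)
  ultimately show ?thesis by simp
qed

lemma J_zero_right_interior:
  assumes "0 < a" "a < 1"
  shows "J a 0 = 1"
proof (rule ccontr)
  define d where "d = J a 0"
  have d: "0 \<le> d" "d \<le> 1"
    using range[of a 0] assms by (auto simp: mem_JD_iff d_def)
  assume "J a 0 \<noteq> 1"
  with d have "J a 1 < J a d"
    using strict_antimono_second[of a d 1] assms by (simp add: d_def)
  moreover have "J a d = 0"
    using involution[of a 0] assms by (simp add: d_def)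
  moreover have "0 \<le> J a 1"
    using range[of a 1] assms by (simp add: mem_JD_iff)
  ultimately show False by simp
qed

lemma J_zero_right:
  assumes "0 < a" "a \<le> 1"
  shows "J a 0 = 1"
proof (cases "a < 1")
  case True
  then show ?thesis using J_zero_right_interior assms by simp
next
  case False
  then have "a = 1" using assms by simp
  moreover have "J (1/2) 0 \<le> J 1 0"
    using mono_first[of "1/2" 0 1] by (simp add: mem_JD_iff)
  moreover have "J 1 0 \<le> 1"
    using range[of 1 0] by (simp add: mem_JD_iff)
  ultimately show ?thesis using J_zero_right_interior[of "1/2"] by simp
qed

lemma J_zero_left: "0 < b \<Longrightarrow> b \<le> 1 \<Longrightarrow> J 0 b = 0"
  using complement[of b 0] J_zero_right[of b] by (simp add: mem_JD_iff)

lemma J_one_right: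
  assumes "0 \<le> a" "a < 1"
  shows "J a 1 = 0"
proof (cases "a = 0")
  case True
  then show ?thesis using J_zero_left by simp
next
  case False
  then show ?thesis using involution[of a 0] J_zero_right_interior[of a] assms by simp
qed

lemma J_one_left: "0 \<le> b \<Longrightarrow> b < 1 \<Longrightarrow> J 1 b = 1"
  using complement[of b 1] J_one_right[of b] by (simp add: mem_JD_iff)

lemma J_half:
  assumes "0 \<le> a" "a \<le> 1"
  shows "J a (1/2) = a"
proof (cases "a = 0 \<or> a = 1")
  case True
  then show ?thesis
    using complement[of "1/2" 0] complement[of "1/2" 1] J_zero_right[of "1/2"] J_one_right[of "1/2"]
    by (auto simp: mem_JD_iff)
next
  case False
  then have a: "0 < a" "a < 1" using assms by auto
  define c where "c = J a (1/2)"
  have c: "0 \<le> c" "c \<le> 1"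
    using range[of a "1/2"] a by (auto simp: mem_JD_iff c_def)
  have "J a c = 1/2"
    using involution[of a "1/2"] a by (simp add: c_def)
  then have "J c a = 1/2"
    using complement[of a c] a c by (simp add: mem_JD_iff)
  moreover have "J a a = 1/2"
    using complement[of a a] a by (simp add: mem_JD_iff)
  ultimately have "c = a"
    using strict_mono_first[of a c a] strict_mono_first[of a a c] a c
    by (cases c a rule: linorder_cases) auto
  then show ?thesis by (simp add: c_def)
qed

lemma J_reflect_interior:
  assumes "0 < a" "a < 1" "0 < b" "b < 1"
  shows "J (1 - b) (1 - a) = J a b"
proof -
  define c where "c = J a b"
  have c: "0 \<le> c" "c \<le> 1"
    using range[of a b] assms by (auto simp: mem_JD_iff c_def)
  have "J a c = b"
    using involution[of a b] assms by (simp add: c_def)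
  then have c_interior: "0 < c" "c < 1"
    using c J_zero_right[of a] J_one_right[of a] assms by (auto simp: less_le)
  have "J c a = 1 - b"
    using complement[of a c] assms c \<open>J a c = b\<close> by (simp add: mem_JD_iff)
  then have "J c (1 - b) = a"
    using involution[of c a] c_interior assms by simp
  then have "J (1 - b) c = 1 - a"
    using complement[of c "1 - b"] c_interior assms by (simp add: mem_JD_iff)
  then show ?thesis
    using involution[of "1 - b" c] assms c by (simp add: c_def)
qed

lemma J_reflect:
  assumes ab: "(a, b) \<in> JD"
  shows "J (1 - b) (1 - a) = J a b"
proof (cases "0 < a \<and> a < 1 \<and> 0 < b \<and> b < 1")
  case True
  then show ?thesis using J_reflect_interior by simp
next
  case False
  then consider "a = 0" | "a = 1" | "b = 0" | "b = 1"
    using ab by (auto simp: mem_JD_iff)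
  then show ?thesis
  proof cases
    case 1 then show ?thesis using ab J_zero_left[of b] J_one_right[of "1 - b"] by (simp add: mem_JD_iff)
  next
    case 2 then show ?thesis using ab J_one_left[of b] J_zero_right[of "1 - b"] by (simp add: mem_JD_iff)
  next
    case 3 then show ?thesis using ab J_zero_right[of a] J_one_left[of "1 - a"] by (simp add: mem_JD_iff)
  next
    case 4 then show ?thesis using ab J_one_right[of a] J_zero_left[of "1 - a"] by (simp add: mem_JD_iff)
  qed
qed

lemma involutive_jamesian: "involutive_jamesian J"
  unfolding involutive_jamesian_def jamesian_def
  using J_half J_zero_right complement J_reflect mono involution by auto

end

theorem proposition5p1:
  fixes J :: "real \<Rightarrow> real \<Rightarrow> real"
  assumes "\<forall>(a,b) \<in> JD. J a b \<in> {0..1}"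
  shows "involutive_jamesian J \<longleftrightarrow>
           (\<forall>a \<in> {0<..<1}. \<forall>b \<in> {0..1}. J a (J a b) = b) \<and>
           (\<forall>(a,b) \<in> JD. J b a = 1 - J a b) \<and>
           mono_cond J"
proof
  assume "involutive_jamesian J"
  then show "(\<forall>a \<in> {0<..<1}. \<forall>b \<in> {0..1}. J a (J a b) = b) \<and>
      (\<forall>(a,b) \<in> JD. J b a = 1 - J a b) \<and> mono_cond J"
    unfolding involutive_jamesian_def jamesian_def by auto
next
  assume "(\<forall>a \<in> {0<..<1}. \<forall>b \<in> {0..1}. J a (J a b) = b) \<and>
      (\<forall>(a,b) \<in> JD. J b a = 1 - J a b) \<and> mono_cond J"
  with assms have "involutive_complementary J"
    by unfold_locales auto
  then show "involutive_jamesian J"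
    by (rule involutive_complementary.involutive_jamesian)
qed

end
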